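(* Let $n\in\mathbb N$ and let $\varphi\colon[0,\infty)\to[0,\infty)$ be a continuous increasing function with $\varphi(0)=0$ such that $\liminf_{r\to0^+}\varphi(r)/r^n>0$. Then there exist a continuous increasing function $\varphi^\circ\colon[0,\infty)\to[0,\infty)$ with $\varphi^\circ(0)=0$ and a constant $c=c(n)>0$ such that $r\mapsto\varphi^\circ(r)/r^n$ is non-increasing on $(0,\infty)$ and $$c\,\mathscr H^{\varphi}_\delta(E)\le \mathscr H^{\varphi^\circ}_\delta(E)\le \mathscr H^{\varphi}_\delta(E)$$ for every $\delta\in(0,\infty]$ and every set $E\subset\mathbb R^n$.
   Context: For a continuous increasing function $\phi\colon[0,\infty)\to[0,\infty)$ with $\phi(0)=0$, for $\delta\in(0,\infty]$ and $E\subset\mathbb R^n$, set $\mathscr H^{\phi}_\delta(E)=\inf\{\sum_{i=1}^\infty\phi(d(E_i)) : E_i\subset\mathbb R^n,\ d(E_i)\le\delta,\ E\subset\bigcup_i E_i\}$, where $d(\cdot)$ denotes the diameter. *)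

theory Defs
  imports "HOL-Analysis.Analysis" "HOL-Library.Extended_Nonnegative_Real"
begin

definition ediam :: "'a::metric_space set \<Rightarrow> ereal" where
  "ediam A = (if bounded A then ereal (diameter A) else \<infinity>)"

definition hcost :: "(real \<Rightarrow> real) \<Rightarrow> 'a::metric_space set \<Rightarrow> ennreal" where
  "hcost \<phi> A = (if bounded A then ennreal (\<phi> (diameter A)) else \<infinity>)"

definition hausdorff_content ::
    "(real \<Rightarrow> real) \<Rightarrow> ereal \<Rightarrow> 'a::metric_space set \<Rightarrow> ennreal" where
  "hausdorff_content \<phi> \<delta> E =
     (INF C \<in> {C :: nat \<Rightarrow> 'a set. (\<forall>i. ediam (C i) \<le> \<delta>) \<and> E \<subseteq> (\<Union>i. C i)}.
        (\<Sum>i. hcost \<phi> (C i)))"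

definition gauge_fun :: "(real \<Rightarrow> real) \<Rightarrow> bool" where
  "gauge_fun \<phi> \<longleftrightarrow> continuous_on {0..} \<phi> \<and> mono_on {0..} \<phi> \<and>
     (\<forall>r\<ge>0. \<phi> r \<ge> 0) \<and> \<phi> 0 = 0"

end

theory Submission
  imports Defs
begin

text \<open>The regularised gauge is
  \<open>\<phi>\<degree>(r) = r\<^sup>n \<cdot> inf {\<phi>(s)/s\<^sup>n | 0 < s \<le> r}\<close>.
  It lies below \<open>\<phi>\<close>, and \<open>\<phi>\<degree>(r)/r\<^sup>n\<close> is non-increasing by construction.
  For the reverse comparison, a set \<open>C\<close> of diameter \<open>d\<close> is cut by a cubical grid
  of mesh \<open>s \<le> d\<close>, where \<open>s\<close> nearly attains the infimum defining \<open>\<phi>\<degree>(d)\<close>, into at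
  most \<open>(5n)\<^sup>n (d/s)\<^sup>n\<close> pieces of diameter \<open>\<le> s\<close>; their total \<open>\<phi>\<close>-cost is at most
  \<open>(5n)\<^sup>n d\<^sup>n \<phi>(s)/s\<^sup>n \<le> 2 (5n)\<^sup>n \<phi>\<degree>(d)\<close>.  The liminf hypothesis makes the infimum
  positive, which is needed for the near-minimiser \<open>s\<close> to exist.\<close>

definition density_inf :: "(real \<Rightarrow> real) \<Rightarrow> nat \<Rightarrow> real \<Rightarrow> real" where
  "density_inf \<phi> n r = Inf ((\<lambda>s. \<phi> s / s ^ n) ` {0<..r})"

definition regularized_gauge :: "(real \<Rightarrow> real) \<Rightarrow> nat \<Rightarrow> real \<Rightarrow> real" where
  "regularized_gauge \<phi> n r = (if r \<le> 0 then 0 else r ^ n * density_inf \<phi> n r)"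

lemma gauge_fun_density_nonneg: "gauge_fun \<phi> \<Longrightarrow> 0 < s \<Longrightarrow> 0 \<le> \<phi> s / s ^ n"
  unfolding gauge_fun_def by auto

lemma bdd_below_density: "gauge_fun \<phi> \<Longrightarrow> bdd_below ((\<lambda>s. \<phi> s / s ^ n) ` {0<..r})"
  by (rule bdd_belowI2[where m = 0]) (auto intro: gauge_fun_density_nonneg)

lemma density_inf_le:
  "gauge_fun \<phi> \<Longrightarrow> 0 < s \<Longrightarrow> s \<le> r \<Longrightarrow> density_inf \<phi> n r \<le> \<phi> s / s ^ n"
  unfolding density_inf_def by (rule cInf_lower) (auto intro: bdd_below_density)

lemma density_inf_nonneg: "gauge_fun \<phi> \<Longrightarrow> 0 < r \<Longrightarrow> 0 \<le> density_inf \<phi> n r"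
  unfolding density_inf_def by (rule cInf_greatest) (auto intro: gauge_fun_density_nonneg)

lemma density_inf_antimono:
  "gauge_fun \<phi> \<Longrightarrow> 0 < r \<Longrightarrow> r \<le> r' \<Longrightarrow> density_inf \<phi> n r' \<le> density_inf \<phi> n r"
  unfolding density_inf_def by (rule cInf_superset_mono) (auto intro: bdd_below_density)

lemma density_inf_pos:
  assumes g: "gauge_fun \<phi>" and lim: "Liminf (at_right 0) (\<lambda>r. ereal (\<phi> r / r ^ n)) > 0"
    and d: "0 < d"
  shows "0 < density_inf \<phi> n d"
proof -
  obtain a where a: "0 < ereal a" "ereal a < Liminf (at_right 0) (\<lambda>r. ereal (\<phi> r / r ^ n))"
    using ereal_dense2[OF lim] by blast
  have "\<forall>\<^sub>F r in at_right (0::real). a < \<phi> r / r ^ n"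
    using less_LiminfD[OF a(2)] by simp
  then obtain b where b: "0 < b" "\<And>y. 0 < y \<Longrightarrow> y < b \<Longrightarrow> a < \<phi> y / y ^ n"
    unfolding eventually_at_right_field by blast
  define t where "t = min (b/2) d"
  have t: "0 < t" "t < b" "t \<le> d" using b d unfolding t_def by auto
  have "0 < a * t ^ n" using a(1) t by simp
  with b(2)[OF t(1,2)] t have pt: "0 < \<phi> t" by (simp add: field_simps)
  \<comment> \<open>below \<open>b\<close> the density exceeds \<open>a\<close>; on \<open>[b, d]\<close> it is at least \<open>\<phi>(t)/d\<^sup>n\<close>\<close>
  have "min a (\<phi> t / d ^ n) \<le> density_inf \<phi> n d"
    unfolding density_inf_def
  proof (rule cInf_greatest)
    fix y assume "y \<in> (\<lambda>s. \<phi> s / s ^ n) ` {0<..d}"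
    then obtain s where s: "0 < s" "s \<le> d" "y = \<phi> s / s ^ n" by auto
    show "min a (\<phi> t / d ^ n) \<le> y"
    proof (cases "s < b")
      case True
      then show ?thesis using b(2)[OF s(1)] s(3) by simp
    next
      case False
      then have "\<phi> t \<le> \<phi> s"
        using g t s unfolding gauge_fun_def by (auto intro: mono_onD)
      moreover have "\<phi> t / d ^ n \<le> \<phi> t / s ^ n"
        using pt s by (intro divide_left_mono power_mono mult_pos_pos) auto
      ultimately have "\<phi> t / d ^ n \<le> y"
        using s by (metis divide_right_mono order_trans zero_le_power less_imp_le)
      then show ?thesis by simp
    qed
  qed (use d in auto)
  moreover have "0 < min a (\<phi> t / d ^ n)" using a(1) pt d by simp
  ultimately show ?thesis by linarith
qed

lemma regularized_gauge_nonneg: "gauge_fun \<phi> \<Longrightarrow> 0 \<le> regularized_gauge \<phi> n r"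
  unfolding regularized_gauge_def using density_inf_nonneg[of \<phi> r n] by auto

lemma regularized_gauge_le:
  assumes g: "gauge_fun \<phi>" and r: "0 \<le> r"
  shows "regularized_gauge \<phi> n r \<le> \<phi> r"
proof (cases "r = 0")
  case True
  then show ?thesis using g by (simp add: regularized_gauge_def gauge_fun_def)
next
  case False
  with r have "0 < r" by simp
  then show ?thesis
    using mult_left_mono[OF density_inf_le[OF g \<open>0 < r\<close> order.refl, of n], of "r ^ n"]
    by (simp add: regularized_gauge_def)
qed

lemma regularized_gauge_mono:
  assumes g: "gauge_fun \<phi>" and r: "0 < r" "r \<le> r'"
  shows "regularized_gauge \<phi> n r \<le> regularized_gauge \<phi> n r'"
proof -
  let ?m = "regularized_gauge \<phi> n r"
  have r': "0 < r'" using r by simp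
  have "?m / r' ^ n \<le> density_inf \<phi> n r'"
    unfolding density_inf_def[of \<phi> n r']
  proof (rule cInf_greatest)
    fix y assume "y \<in> (\<lambda>s. \<phi> s / s ^ n) ` {0<..r'}"
    then obtain s where s: "0 < s" "s \<le> r'" "y = \<phi> s / s ^ n" by auto
    have m_nonneg: "0 \<le> ?m" by (rule regularized_gauge_nonneg[OF g])
    show "?m / r' ^ n \<le> y"
    proof (cases "s \<le> r")
      case True
      have "?m / r' ^ n \<le> ?m / r ^ n"
        using r m_nonneg by (intro divide_left_mono power_mono) auto
      also have "\<dots> = density_inf \<phi> n r" using r by (simp add: regularized_gauge_def)
      also have "\<dots> \<le> y" using density_inf_le[OF g s(1) True] s(3) by simp
      finally show ?thesis .
    next
      case False
      have "?m \<le> \<phi> r" using regularized_gauge_le[OF g] r by simp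
      also have "\<dots> \<le> \<phi> s" using g r False unfolding gauge_fun_def by (auto intro: mono_onD)
      finally have "?m / r' ^ n \<le> \<phi> s / r' ^ n" using r' by (intro divide_right_mono) auto
      also have "\<dots> \<le> \<phi> s / s ^ n"
        using g s unfolding gauge_fun_def by (intro divide_left_mono power_mono) auto
      finally show ?thesis using s(3) by simp
    qed
  qed (use r' in auto)
  then show ?thesis using r r' by (simp add: regularized_gauge_def field_simps)
qed

lemma regularized_gauge_growth:
  assumes g: "gauge_fun \<phi>" and r: "0 < r" "r \<le> r'"
  shows "regularized_gauge \<phi> n r' \<le> (r'/r) ^ n * regularized_gauge \<phi> n r"
proof -
  have "r' ^ n * density_inf \<phi> n r' \<le> r' ^ n * density_inf \<phi> n r"
    using density_inf_antimono[OF g r] r by (simp add: mult_left_mono)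
  also have "\<dots> = (r'/r) ^ n * (r ^ n * density_inf \<phi> n r)"
    using r by (simp add: power_divide)
  finally show ?thesis using r by (simp add: regularized_gauge_def)
qed

lemma regularized_gauge_ratio_bounds:
  assumes g: "gauge_fun \<phi>" and xy: "0 < x" "0 < y"
  shows "min 1 ((y/x) ^ n) * regularized_gauge \<phi> n x \<le> regularized_gauge \<phi> n y"
    and "regularized_gauge \<phi> n y \<le> max 1 ((y/x) ^ n) * regularized_gauge \<phi> n x"
proof -
  let ?f = "regularized_gauge \<phi> n" and ?q = "(y/x) ^ n"
  have f_nonneg: "0 \<le> ?f x" by (rule regularized_gauge_nonneg[OF g])
  have "min 1 ?q * ?f x \<le> ?f y \<and> ?f y \<le> max 1 ?q * ?f x"
  proof (cases "x \<le> y")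
    case True
    have "1 \<le> ?q" using xy True by (simp add: one_le_power)
    then show ?thesis
      using regularized_gauge_mono[OF g xy(1) True] regularized_gauge_growth[OF g xy(1) True]
      by (simp add: min_def max_def)
  next
    case False
    have "?q \<le> 1" using xy False by (simp add: power_le_one)
    have "?f x \<le> (x/y) ^ n * ?f y" using regularized_gauge_growth[OF g xy(2), of x n] False by simp
    then have "?q * ?f x \<le> ?q * ((x/y) ^ n * ?f y)" by (rule mult_left_mono) (use xy in simp)
    also have "\<dots> = ?f y" using xy by (simp add: power_divide)
    finally show ?thesis
      using \<open>?q \<le> 1\<close> regularized_gauge_mono[OF g xy(2), of x n] False
      by (simp add: min_def max_def)
  qed
  then show "min 1 ?q * ?f x \<le> ?f y" "?f y \<le> max 1 ?q * ?f x" by auto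
qed

lemma continuous_on_regularized_gauge:
  assumes g: "gauge_fun \<phi>"
  shows "continuous_on {0..} (regularized_gauge \<phi> n)"
  unfolding continuous_on_eq_continuous_within
proof
  fix x :: real assume "x \<in> {0..}"
  let ?f = "regularized_gauge \<phi> n"
  show "continuous (at x within {0..}) ?f"
  proof (cases "x = 0")
    case True
    have "(\<phi> \<longlongrightarrow> 0) (at 0 within {0..})"
      using g unfolding gauge_fun_def continuous_on_def by force
    then have "(?f \<longlongrightarrow> 0) (at 0 within {0..})"
    proof (rule tendsto_sandwich[rotated 3])
      show "\<forall>\<^sub>F y in at 0 within {0..}. 0 \<le> ?f y"
        using regularized_gauge_nonneg[OF g] by simp
      show "\<forall>\<^sub>F y in at 0 within {0..}. ?f y \<le> \<phi> y"
        unfolding eventually_at_filter using regularized_gauge_le[OF g] by simp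
    qed simp
    then show ?thesis using True by (simp add: continuous_within regularized_gauge_def)
  next
    case False
    with \<open>x \<in> {0..}\<close> have x: "0 < x" by simp
    let ?lo = "\<lambda>y. min 1 ((y/x) ^ n) * ?f x" and ?hi = "\<lambda>y. max 1 ((y/x) ^ n) * ?f x"
    have pos: "\<forall>\<^sub>F y in at x. 0 < y" using order_tendstoD(1)[OF tendsto_ident_at x] .
    have "(?lo \<longlongrightarrow> min 1 ((x/x) ^ n) * ?f x) (at x)" "(?hi \<longlongrightarrow> max 1 ((x/x) ^ n) * ?f x) (at x)"
      by (intro tendsto_intros; use x in simp)+
    then have "(?lo \<longlongrightarrow> ?f x) (at x)" "(?hi \<longlongrightarrow> ?f x) (at x)" using x by simp_all
    then have "(?f \<longlongrightarrow> ?f x) (at x)"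
    proof (rule tendsto_sandwich[rotated 2])
      show "\<forall>\<^sub>F y in at x. ?lo y \<le> ?f y" "\<forall>\<^sub>F y in at x. ?f y \<le> ?hi y"
        using pos by (auto elim!: eventually_mono intro: regularized_gauge_ratio_bounds[OF g x])
    qed
    then show ?thesis by (simp add: continuous_at continuous_at_imp_continuous_at_within)
  qed
qed

lemma gauge_fun_regularized_gauge:
  assumes g: "gauge_fun \<phi>"
  shows "gauge_fun (regularized_gauge \<phi> n)"
  unfolding gauge_fun_def
proof (intro conjI allI impI)
  show "mono_on {0..} (regularized_gauge \<phi> n)"
  proof (rule mono_onI)
    fix r s :: real assume "r \<in> {0..}" "s \<in> {0..}" "r \<le> s"
    then show "regularized_gauge \<phi> n r \<le> regularized_gauge \<phi> n s"
      using regularized_gauge_mono[OF g, of r s n] regularized_gauge_nonneg[OF g, of n s]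
      by (cases "r = 0") (auto simp: regularized_gauge_def)
  qed
  show "regularized_gauge \<phi> n 0 = 0" by (simp add: regularized_gauge_def)
qed (simp_all add: continuous_on_regularized_gauge[OF g] regularized_gauge_nonneg[OF g])

lemma antimono_on_regularized_gauge_density:
  "gauge_fun \<phi> \<Longrightarrow> antimono_on {0<..} (\<lambda>r. regularized_gauge \<phi> n r / r ^ n)"
  unfolding monotone_on_def by (auto simp: regularized_gauge_def intro: density_inf_antimono)

subsection \<open>Covering a bounded set of \<open>\<real>\<^sup>n\<close> by small pieces\<close>

lemma dist_le_of_same_grid_cell:
  fixes x y a :: "real ^ 'n::finite" and h :: real
  assumes h: "0 < h" and cell: "\<And>i. \<lfloor>(x$i - a$i) / h\<rfloor> = \<lfloor>(y$i - a$i) / h\<rfloor>"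
  shows "dist x y \<le> CARD('n) * h"
proof -
  have "\<bar>(x - y)$i\<bar> \<le> h" for i
  proof -
    have "\<bar>(x$i - a$i) / h - (y$i - a$i) / h\<bar> < 1" by (rule floor_eq_imp_diff_1[OF cell])
    then have "\<bar>(x$i - y$i) / h\<bar> < 1" by (simp add: diff_divide_distrib)
    then have "\<bar>x$i - y$i\<bar> / \<bar>h\<bar> < 1" by (simp only: abs_divide)
    then show ?thesis using h by (simp add: divide_less_eq)
  qed
  then have "(\<Sum>i\<in>UNIV. \<bar>(x - y)$i\<bar>) \<le> (\<Sum>i\<in>(UNIV::'n set). h)" by (intro sum_mono)
  then have "norm (x - y) \<le> (\<Sum>i\<in>(UNIV::'n set). h)" using norm_le_l1_cart[of "x - y"] by linarith
  then show ?thesis by (simp add: dist_norm)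
qed

lemma grid_cover:
  fixes A :: "(real ^ 'n::finite) set"
  assumes bA: "bounded A" and s: "0 < s" "s \<le> diameter A"
  shows "\<exists>D M. (\<forall>j. D j \<subseteq> A) \<and> A \<subseteq> (\<Union>j::nat. D j) \<and> (\<forall>j. diameter (D j) \<le> s) \<and>
     (\<forall>j\<ge>M. D j = {}) \<and> real M \<le> (5 * real CARD('n)) ^ CARD('n) * (diameter A / s) ^ CARD('n)"
proof -
  define n where "n = CARD('n)"
  define d where "d = diameter A"
  have n: "1 \<le> n" unfolding n_def by (simp add: Suc_le_eq)
  have d: "0 < d" using s unfolding d_def by simp
  then obtain a where a: "a \<in> A" unfolding d_def by fastforce
  \<comment> \<open>cells of side \<open>h = s/n\<close> have diameter \<open>\<le> s\<close>, and along each axis at most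
      \<open>2\<lceil>d/h\<rceil> + 1 \<le> 5dn/s\<close> of them meet \<open>A\<close>\<close>
  define h where "h = s / n"
  have h: "0 < h" using s n unfolding h_def by simp
  define L where "L = \<lceil>d / h\<rceil>"
  define cell where "cell = (\<lambda>x::real^'n. \<lambda>i. \<lfloor>(x$i - a$i) / h\<rfloor>)"
  define I where "I = Pi\<^sub>E UNIV (\<lambda>_::'n. {-L..L})"
  have cell_I: "cell x \<in> I" if "x \<in> A" for x
  proof -
    have "-(d/h) \<le> (x$i - a$i)/h \<and> (x$i - a$i)/h \<le> d/h" for i
    proof -
      have "\<bar>x$i - a$i\<bar> \<le> d"
        using component_le_norm_cart[of "x - a" i] diameter_bounded_bound[OF bA that a]
        unfolding d_def dist_norm by simp
      then have "-d \<le> x$i - a$i" "x$i - a$i \<le> d" by (simp_all add: abs_le_iff)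
      then show ?thesis
        using divide_right_mono[of "-d" "x$i - a$i" h] divide_right_mono[of "x$i - a$i" d h] h
        by simp
    qed
    then have "\<lfloor>-(d/h)\<rfloor> \<le> cell x i \<and> cell x i \<le> \<lfloor>d/h\<rfloor>" for i
      unfolding cell_def by (auto intro: floor_mono)
    moreover have "\<lfloor>d/h\<rfloor> \<le> L" "\<lfloor>-(d/h)\<rfloor> = - L"
      unfolding L_def by (auto simp: floor_le_ceiling floor_minus)
    ultimately have "cell x i \<in> {-L..L}" for i by (metis atLeastAtMost_iff order_trans)
    then show ?thesis unfolding I_def by auto
  qed
  have "finite I" unfolding I_def by (intro finite_PiE) auto
  then obtain e where e: "bij_betw e {0..<card I} I" using ex_bij_betw_nat_finite by blast
  define M where "M = card I"
  define D where "D = (\<lambda>j. if j < M then {x\<in>A. cell x = e j} else {})"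
  have cover: "A \<subseteq> (\<Union>j. D j)"
  proof
    fix x assume x: "x \<in> A"
    have "cell x \<in> e ` {0..<M}" using cell_I[OF x] e unfolding M_def by (simp add: bij_betw_def)
    then obtain j where "j < M" "cell x = e j" by auto
    then show "x \<in> (\<Union>j. D j)" using x unfolding D_def by auto
  qed
  have small: "diameter (D j) \<le> s" for j
  proof (rule diameter_le)
    fix x y assume "x \<in> D j" "y \<in> D j"
    then have "cell x = cell y" unfolding D_def by (auto split: if_splits)
    then have "dist x y \<le> n * h"
      using dist_le_of_same_grid_cell[where x = x and y = y and a = a, OF h]
      unfolding n_def cell_def by (simp add: fun_eq_iff)
    then show "norm (x - y) \<le> s" using n unfolding h_def by (simp add: dist_norm)
  qed (use s in simp)
  have ratio: "1 \<le> d * n / s"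
    using s n mult_mono[of s d 1 n] unfolding d_def by (simp add: le_divide_eq)
  have "d / h = d * n / s" unfolding h_def using n s by (simp add: field_simps)
  then have L: "real_of_int L \<le> d * n / s + 1" "0 \<le> L"
    unfolding L_def using of_int_ceiling_le_add_one[of "d/h"] ratio by auto
  have "real (nat (2*L+1)) = 2 * real_of_int L + 1" using L(2) by simp
  also have "\<dots> \<le> 5 * (d * n / s)" using L(1) ratio by linarith
  finally have "real (nat (2*L+1)) \<le> 5 * real n * (d / s)" by (simp add: ac_simps)
  then have "real M \<le> (5 * real n * (d / s)) ^ n"
    unfolding M_def I_def n_def by (simp add: card_PiE power_mono)
  then have "real M \<le> (5 * real n) ^ n * (d / s) ^ n" by (simp only: power_mult_distrib)
  moreover have "\<forall>j. D j \<subseteq> A" "\<forall>j\<ge>M. D j = {}" unfolding D_def by auto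
  ultimately show ?thesis using cover small unfolding n_def d_def by blast
qed

subsection \<open>Comparing Hausdorff contents\<close>

lemma ediam_mono: "B \<subseteq> A \<Longrightarrow> ediam B \<le> ediam A"
  unfolding ediam_def using bounded_subset diameter_subset by auto

lemma hausdorff_content_mono_gauge:
  assumes "\<And>r. 0 \<le> r \<Longrightarrow> \<psi> r \<le> \<phi> r"
  shows "hausdorff_content \<psi> \<delta> E \<le> hausdorff_content \<phi> \<delta> E"
proof -
  have "hcost \<psi> A \<le> hcost \<phi> A" for A :: "'a set"
    using assms unfolding hcost_def by (auto intro!: ennreal_leI diameter_ge_0)
  then show ?thesis
    unfolding hausdorff_content_def by (auto intro!: INF_mono suminf_le)
qed

lemma hausdorff_content_le_by_refinement:
  fixes \<phi> \<psi> :: "real \<Rightarrow> real" and E :: "'a::metric_space set"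
  assumes K: "0 < K"
    and refine: "\<And>C :: 'a set. \<exists>D. (\<forall>j::nat. D j \<subseteq> C) \<and> C \<subseteq> (\<Union>j. D j) \<and>
                     (\<Sum>j. hcost \<phi> (D j)) \<le> ennreal K * hcost \<psi> C"
  shows "ennreal (1 / K) * hausdorff_content \<phi> \<delta> E \<le> hausdorff_content \<psi> \<delta> E"
  unfolding hausdorff_content_def[of \<psi>]
proof (rule INF_greatest)
  fix C :: "nat \<Rightarrow> 'a set"
  assume C: "C \<in> {C. (\<forall>i. ediam (C i) \<le> \<delta>) \<and> E \<subseteq> (\<Union>i. C i)}"
  have "\<forall>i. \<exists>D. (\<forall>j::nat. D j \<subseteq> C i) \<and> C i \<subseteq> (\<Union>j. D j) \<and>
      (\<Sum>j. hcost \<phi> (D j)) \<le> ennreal K * hcost \<psi> (C i)"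
    using refine by blast
  then obtain D where D: "\<And>i. (\<forall>j. D i j \<subseteq> C i) \<and> C i \<subseteq> (\<Union>j. D i j) \<and>
      (\<Sum>j. hcost \<phi> (D i j)) \<le> ennreal K * hcost \<psi> (C i)"
    by metis
  define F where "F = (\<lambda>k. case_prod D (prod_decode k))"
  have "ediam (F k) \<le> \<delta>" for k
  proof -
    obtain i j where ij: "prod_decode k = (i, j)" by (cases "prod_decode k")
    have "ediam (F k) \<le> ediam (C i)" unfolding F_def ij using D[of i] by (auto intro: ediam_mono)
    also have "\<dots> \<le> \<delta>" using C by auto
    finally show ?thesis .
  qed
  moreover have "E \<subseteq> (\<Union>k. F k)"
  proof
    fix x assume "x \<in> E"
    then obtain i j where "x \<in> D i j" using C D by blast
    then have "x \<in> F (prod_encode (i, j))" unfolding F_def by simp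
    then show "x \<in> (\<Union>k. F k)" by blast
  qed
  ultimately have "hausdorff_content \<phi> \<delta> E \<le> (\<Sum>k. hcost \<phi> (F k))"
    unfolding hausdorff_content_def by (intro INF_lower) auto
  also have "\<dots> = (\<Sum>i. \<Sum>j. hcost \<phi> (D i j))"
    unfolding F_def
    using suminf_ennreal_2dimen[of "\<lambda>i. \<Sum>j. hcost \<phi> (D i j)" "\<lambda>(i,j). hcost \<phi> (D i j)"]
    by (simp add: case_prod_beta' split_def)
  also have "\<dots> \<le> (\<Sum>i. ennreal K * hcost \<psi> (C i))"
    using D by (intro suminf_le) auto
  also have "\<dots> = ennreal K * (\<Sum>i. hcost \<psi> (C i))"
    by (rule ennreal_suminf_cmult)
  finally have "ennreal (1 / K) * hausdorff_content \<phi> \<delta> E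
      \<le> (ennreal (1 / K) * ennreal K) * (\<Sum>i. hcost \<psi> (C i))"
    by (simp add: mult.assoc mult_left_mono)
  also have "ennreal (1 / K) * ennreal K = 1"
    using K by (simp add: ennreal_mult[symmetric])
  finally show "ennreal (1 / K) * hausdorff_content \<phi> \<delta> E \<le> (\<Sum>i. hcost \<psi> (C i))" by simp
qed

lemma grid_refinement_cost:
  fixes C :: "(real ^ 'n::finite) set"
  assumes g: "gauge_fun \<phi>" and pos: "\<And>d. 0 < d \<Longrightarrow> 0 < density_inf \<phi> CARD('n) d"
  defines "K \<equiv> 2 * (5 * real CARD('n)) ^ CARD('n)"
  shows "\<exists>D. (\<forall>j::nat. D j \<subseteq> C) \<and> C \<subseteq> (\<Union>j. D j) \<and>
     (\<Sum>j. hcost \<phi> (D j)) \<le> ennreal K * hcost (regularized_gauge \<phi> CARD('n)) C"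
proof (cases "bounded C \<and> 0 < diameter C")
  case False
  define D where "D = (\<lambda>j::nat. if j = 0 then C else {})"
  have "(\<Sum>j. hcost \<phi> (D j)) \<le> ennreal K * hcost (regularized_gauge \<phi> CARD('n)) C"
  proof (cases "bounded C")
    case True
    with False have "diameter C = 0" using diameter_ge_0[of C] by linarith
    then have "hcost \<phi> (D j) = 0" for j using g True unfolding D_def hcost_def gauge_fun_def by auto
    then show ?thesis by simp
  qed (simp add: hcost_def K_def ennreal_mult_top)
  then show ?thesis by (intro exI[of _ D]) (auto simp: D_def)
next
  case True
  define n d where "n = CARD('n)" and "d = diameter C"
  let ?dens = "\<lambda>s. \<phi> s / s ^ n"
  have bC: "bounded C" and d: "0 < d" using True unfolding d_def by auto
  have "0 < density_inf \<phi> n d" using pos d unfolding n_def by simp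
  then have "Inf (?dens ` {0<..d}) < 2 * density_inf \<phi> n d"
    unfolding density_inf_def by simp
  then obtain s where s: "0 < s" "s \<le> d" "?dens s < 2 * density_inf \<phi> n d"
    using cINF_less_iff[of "{0<..d}" ?dens] bdd_below_density[OF g] d by auto
  obtain D M where D: "\<forall>j. D j \<subseteq> C" "C \<subseteq> (\<Union>j. D j)" "\<forall>j. diameter (D j) \<le> s"
      "\<forall>j\<ge>M. D j = {}" "real M \<le> (5 * real n) ^ n * (d / s) ^ n"
    using grid_cover[OF bC, of s] s unfolding d_def n_def by blast
  have piece_cost: "hcost \<phi> (D j) \<le> ennreal (\<phi> s)" for j
  proof -
    have bD: "bounded (D j)" using D(1) bC bounded_subset by blast
    then have "\<phi> (diameter (D j)) \<le> \<phi> s"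
      using g D(3) s diameter_ge_0[OF bD] unfolding gauge_fun_def by (auto intro: mono_onD)
    then show ?thesis unfolding hcost_def using bD by (simp add: ennreal_leI)
  qed
  have "(\<Sum>j. hcost \<phi> (D j)) = (\<Sum>j<M. hcost \<phi> (D j))"
    using D(4) g by (intro suminf_finite) (auto simp: hcost_def gauge_fun_def)
  also have "\<dots> \<le> (\<Sum>j<M. ennreal (\<phi> s))" by (intro sum_mono piece_cost)
  also have "\<dots> = ennreal (real M * \<phi> s)"
    using g s by (simp add: gauge_fun_def ennreal_of_nat_eq_real_of_nat ennreal_mult)
  also have "\<dots> \<le> ennreal (K * regularized_gauge \<phi> n d)"
  proof (rule ennreal_leI)
    have "real M * \<phi> s \<le> (5 * real n) ^ n * (d / s) ^ n * \<phi> s"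
      using D(5) g s unfolding gauge_fun_def by (intro mult_right_mono) auto
    also have "\<dots> = (5 * real n) ^ n * d ^ n * ?dens s" using s by (simp add: power_divide)
    also have "\<dots> \<le> (5 * real n) ^ n * d ^ n * (2 * density_inf \<phi> n d)"
      using s(3) d by (intro mult_left_mono) auto
    finally show "real M * \<phi> s \<le> K * regularized_gauge \<phi> n d"
      using d unfolding regularized_gauge_def K_def n_def by simp
  qed
  also have "\<dots> = ennreal K * hcost (regularized_gauge \<phi> n) C"
    unfolding hcost_def d_def K_def using bC regularized_gauge_nonneg[OF g]
    by (simp add: ennreal_mult)
  finally show ?thesis using D(1,2) unfolding n_def by blast
qed

theorem lemma2p1:
  "\<exists>c::real. c > 0 \<and>
     (\<forall>\<phi>. gauge_fun \<phi> \<and>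
          Liminf (at_right 0) (\<lambda>r. ereal (\<phi> r / r ^ CARD('n))) > 0 \<longrightarrow>
        (\<exists>\<phi>\<^sub>0. gauge_fun \<phi>\<^sub>0 \<and>
           antimono_on {0<..} (\<lambda>r. \<phi>\<^sub>0 r / r ^ CARD('n)) \<and>
           (\<forall>\<delta>::ereal. \<forall>E :: (real ^ 'n::finite) set. \<delta> > 0 \<longrightarrow>
              ennreal c * hausdorff_content \<phi> \<delta> E \<le> hausdorff_content \<phi>\<^sub>0 \<delta> E \<and>
              hausdorff_content \<phi>\<^sub>0 \<delta> E \<le> hausdorff_content \<phi> \<delta> E)))"
proof -
  define K where "K = 2 * (5 * real CARD('n)) ^ CARD('n)"
  have K: "0 < K" unfolding K_def by simp
  show ?thesis
  proof (intro exI[of _ "1 / K"] conjI allI impI)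
    fix \<phi> :: "real \<Rightarrow> real"
    assume "gauge_fun \<phi> \<and> 0 < Liminf (at_right 0) (\<lambda>r. ereal (\<phi> r / r ^ CARD('n)))"
    then have g: "gauge_fun \<phi>" and pos: "\<And>d. 0 < d \<Longrightarrow> 0 < density_inf \<phi> CARD('n) d"
      using density_inf_pos by blast+
    let ?\<phi>\<^sub>0 = "regularized_gauge \<phi> CARD('n)"
    have "ennreal (1 / K) * hausdorff_content \<phi> \<delta> E \<le> hausdorff_content ?\<phi>\<^sub>0 \<delta> E"
      for \<delta> and E :: "(real ^ 'n) set"
      by (rule hausdorff_content_le_by_refinement[OF K grid_refinement_cost[OF g pos, folded K_def]])
    moreover have "hausdorff_content ?\<phi>\<^sub>0 \<delta> E \<le> hausdorff_content \<phi> \<delta> E"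
      for \<delta> and E :: "(real ^ 'n) set"
      by (rule hausdorff_content_mono_gauge) (rule regularized_gauge_le[OF g])
    ultimately show "\<exists>\<phi>\<^sub>0. gauge_fun \<phi>\<^sub>0 \<and> antimono_on {0<..} (\<lambda>r. \<phi>\<^sub>0 r / r ^ CARD('n)) \<and>
        (\<forall>\<delta> (E :: (real ^ 'n) set). 0 < \<delta> \<longrightarrow> ennreal (1 / K) * hausdorff_content \<phi> \<delta> E \<le> hausdorff_content \<phi>\<^sub>0 \<delta> E \<and>
           hausdorff_content \<phi>\<^sub>0 \<delta> E \<le> hausdorff_content \<phi> \<delta> E)"
      using gauge_fun_regularized_gauge[OF g] antimono_on_regularized_gauge_density[OF g] by blast
  qed (use K in simp)
qed

end
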